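(* Let $p$ be a prime, $n,e$ positive integers, and $u_{p,n,e}:\{1,\dots,n\}\to\mathbb{N}$, $u_{p,n,e}(k)=e\,\nu_p\binom{n}{k}+k$. Write $\ell=\log_p\frac{e}{p-1}$. Then the minimum value of $u_{p,n,e}$ is attained exactly at: (a) $k\in\{\frac{e}{p-1},\frac{pe}{p-1}\}$, if $\ell$ is an integer and $\ell<\nu_p(n)$; the minimum value is then $e\big(\nu_p(n)+\frac1{p-1}-\ell\big)$; (b) $k=p^{\nu_p(n)}$, if either $\ell$ is an integer with $\ell\ge\nu_p(n)$, or $\ell$ is not an integer and $\lceil\ell\rceil>\nu_p(n)$; the minimum value is then $p^{\nu_p(n)}$; (c) $k=p^{\lceil\ell\rceil}$, if $\ell$ is not an integer and $\lceil\ell\rceil\le\nu_p(n)$; the minimum value is then $e(\nu_p(n)-\lceil\ell\rceil)+p^{\lceil\ell\rceil}$.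
   Context: $\nu_p$ denotes the $p$-adic valuation. *)

theory Defs
  imports Complex_Main "HOL-Computational_Algebra.Primes"
begin

definition u :: "nat \<Rightarrow> nat \<Rightarrow> nat \<Rightarrow> nat \<Rightarrow> nat" where
  "u p n e k = e * multiplicity p (n choose k) + k"

definition minval :: "nat \<Rightarrow> nat \<Rightarrow> nat \<Rightarrow> nat" where
  "minval p n e = Min (u p n e ` {1..n})"

definition argmins :: "nat \<Rightarrow> nat \<Rightarrow> nat \<Rightarrow> nat set" where
  "argmins p n e = {k \<in> {1..n}. u p n e k = minval p n e}"

definition ell :: "nat \<Rightarrow> nat \<Rightarrow> real" where
  "ell p e = log (real p) (real e / (real p - 1))"

end

theory Submission
  imports Defs
begin

text \<open>Let \<open>v = \<nu>\<^sub>p(n)\<close>. Since \<open>p\<^sup>v\<close> divides \<open>n\<close>, the factors \<open>n - i\<close> and \<open>i\<close> have the same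
  valuation for \<open>0 < i < p\<^sup>v\<close>, so \<open>\<nu>\<^sub>p(n choose k) = v - \<nu>\<^sub>p(k)\<close> for \<open>1 \<le> k \<le> p\<^sup>v\<close>. Hence with
  \<open>j = \<nu>\<^sub>p(k)\<close> we get \<open>u(k) = e(v - j) + k \<ge> e(v - j) + p\<^sup>j = u(p\<^sup>j)\<close>, while \<open>u(k) \<ge> k > p\<^sup>v = u(p\<^sup>v)\<close>
  for \<open>k > p\<^sup>v\<close>. It remains to minimise the convex profile \<open>j \<mapsto> e(v - j) + p\<^sup>j\<close> over
  \<open>0 \<le> j \<le> v\<close>: its increments \<open>p\<^sup>j(p - 1) - e\<close> become nonnegative exactly from \<open>j = \<lceil>\<ell>\<rceil>\<close> on,
  and the increment at \<open>\<lceil>\<ell>\<rceil>\<close> vanishes exactly when \<open>\<ell>\<close> is an integer, which produces the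
  second minimiser \<open>p\<^bsup>\<ell>+1\<^esup>\<close>.\<close>

lemma fact_mult_binomial: "fact k * (n choose k) = (\<Prod>i<k. n - i)"
proof (induction k arbitrary: n)
  case 0
  then show ?case by simp
next
  case (Suc k)
  show ?case
  proof (cases n)
    case 0
    then show ?thesis by (simp add: prod.lessThan_Suc_shift)
  next
    case (Suc m)
    have "fact (Suc k) * (n choose Suc k) = fact k * (Suc k * (Suc m choose Suc k))"
      by (simp add: Suc algebra_simps)
    also have "\<dots> = Suc m * (fact k * (m choose k))"
      by (simp only: Suc_times_binomial) (simp add: algebra_simps)
    also have "\<dots> = (\<Prod>i<Suc k. n - i)"
      unfolding Suc.IH Suc by (subst prod.lessThan_Suc_shift) simp
    finally show ?thesis .
  qed
qed

lemma multiplicity_diff_eq: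
  fixes p n i v :: nat
  assumes "prime p" "p ^ v dvd n" "0 < i" "i < p ^ v" "i \<le> n"
  shows "multiplicity p (n - i) = multiplicity p i"
proof -
  define t where "t = multiplicity p i"
  have ti: "p ^ t dvd i"
    unfolding t_def by (rule multiplicity_dvd)
  have not_ti: "\<not> p ^ Suc t dvd i"
  proof
    assume "p ^ Suc t dvd i"
    moreover have "i \<noteq> 0" "\<not> is_unit p"
      using assms(1,3) by auto
    ultimately have "Suc t \<le> multiplicity p i"
      by (intro multiplicity_geI)
    then show False
      using t_def by simp
  qed
  have "t < v"
  proof (rule ccontr)
    assume "\<not> t < v"
    then have "p ^ v dvd i"
      using ti by (meson dvd_trans le_imp_power_dvd not_less)
    then show False
      using assms(3,4) by (simp add: nat_dvd_not_less)
  qed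
  then have "p ^ Suc t dvd n"
    using assms(2) by (meson Suc_leI dvd_trans le_imp_power_dvd)
  have "p ^ t dvd n - i"
    using \<open>p ^ Suc t dvd n\<close> ti by (metis dvd_diff_nat dvd_mult_right power_Suc)
  moreover have "\<not> p ^ Suc t dvd n - i"
    using \<open>p ^ Suc t dvd n\<close> not_ti assms(5) by (metis diff_diff_cancel dvd_diff_nat)
  ultimately show ?thesis
    using multiplicity_eqI t_def by metis
qed

lemma multiplicity_binomial_add:
  fixes p n k :: nat
  assumes p: "prime p" and "n > 0" and k: "1 \<le> k" "k \<le> p ^ multiplicity p n"
  shows "multiplicity p (n choose k) + multiplicity p k = multiplicity p n"
proof -
  define v where "v = multiplicity p n"
  have dv: "p ^ v dvd n"
    unfolding v_def by (rule multiplicity_dvd)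
  then have kn: "k \<le> n"
    using \<open>n > 0\<close> k v_def by (metis dvd_imp_le order_trans)
  have pe: "prime_elem p"
    using p by simp
  have "multiplicity p (fact k :: nat) + multiplicity p (n choose k)
        = multiplicity p (\<Prod>i<k. n - i)"
    using kn by (simp add: prime_elem_multiplicity_mult_distrib[OF pe] fact_mult_binomial[symmetric])
  also have "\<dots> = (\<Sum>i<k. multiplicity p (n - i))"
    using kn by (intro prime_elem_multiplicity_prod_distrib[OF pe]) auto
  also have "\<dots> = v + (\<Sum>i\<in>{1..<k}. multiplicity p (n - i))"
    using k by (simp add: v_def lessThan_atLeast0 sum.atLeast_Suc_lessThan)
  also have "(\<Sum>i\<in>{1..<k}. multiplicity p (n - i)) = (\<Sum>i\<in>{1..<k}. multiplicity p i)"
    using multiplicity_diff_eq[OF p dv] k kn v_def by (intro sum.cong) auto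
  finally have binom: "multiplicity p (fact k :: nat) + multiplicity p (n choose k)
      = v + (\<Sum>i\<in>{1..<k}. multiplicity p i)" .
  have "multiplicity p (fact k :: nat) = (\<Sum>i\<in>{1..k}. multiplicity p i)"
    using prime_elem_multiplicity_prod_distrib[OF pe, of "\<lambda>i. i" "{1..k}"] by (simp add: fact_prod)
  also have "\<dots> = multiplicity p k + (\<Sum>i\<in>{1..<k}. multiplicity p i)"
    using k by (simp add: atLeastLessThanSuc_atLeastAtMost[symmetric] add.commute)
  finally show ?thesis
    using binom v_def by simp
qed

definition profile :: "nat \<Rightarrow> nat \<Rightarrow> nat \<Rightarrow> nat \<Rightarrow> int" where
  "profile p e v j = int e * (int v - int j) + int (p ^ j)"

lemma profile_Suc:
  assumes "p > 0"
  shows "profile p e v (Suc t) = profile p e v t + int (p ^ t * (p - 1)) - int e"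
  using assms by (simp add: profile_def of_nat_diff algebra_simps)

lemma profile_less_antimono:
  assumes "p > 0" "\<forall>t<j. p ^ t * (p - 1) < e" "i < j"
  shows "profile p e v j < profile p e v i"
proof -
  have step: "profile p e v (Suc t) < profile p e v t" if "t < j" for t
  proof -
    have "int (p ^ t * (p - 1)) < int e"
      using assms(2) that by (simp only: of_nat_less_iff)
    then show ?thesis
      using profile_Suc[OF assms(1), of e v t] by linarith
  qed
  have "- profile p e v i < - profile p e v j"
    by (rule lift_Suc_mono_less_ivl[where N = "{..<j}" and f = "\<lambda>t. - profile p e v t"])
      (use step assms(3) in auto)
  then show ?thesis
    by simp
qed

lemma profile_mono:
  assumes "p > 0" "e \<le> p ^ i * (p - 1)" "i \<le> j"
  shows "profile p e v i \<le> profile p e v j"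
proof -
  have "profile p e v t \<le> profile p e v (Suc t)" if "i \<le> t" for t
  proof -
    have "e \<le> p ^ t * (p - 1)"
      using assms(1,2) power_increasing[OF that, of p] mult_le_mono1 order_trans by fastforce
    then have "int e \<le> int (p ^ t * (p - 1))"
      by (simp only: of_nat_le_iff)
    then show ?thesis
      using profile_Suc[OF assms(1), of e v t] by linarith
  qed
  then show ?thesis
    by (rule lift_Suc_mono_le_ivl[where N = "{i..}"]) (use assms(3) in auto)
qed

lemma profile_less_mono:
  assumes "p > 0" "e < p ^ i * (p - 1)" "i < j"
  shows "profile p e v i < profile p e v j"
proof -
  have "profile p e v t < profile p e v (Suc t)" if "i \<le> t" for t
  proof -
    have "e < p ^ t * (p - 1)"
      using assms(1,2) power_increasing[OF that, of p] mult_le_mono1 order_less_le_trans by fastforce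
    then have "int e < int (p ^ t * (p - 1))"
      by (simp only: of_nat_less_iff)
    then show ?thesis
      using profile_Suc[OF assms(1), of e v t] by linarith
  qed
  then show ?thesis
    by (rule lift_Suc_mono_less_ivl[where N = "{i..}"]) (use assms(3) in auto)
qed

lemma profile_minimum:
  fixes p e v J j :: nat
  assumes p: "p > 1" and J: "e \<le> p ^ J * (p - 1)" "\<forall>t<J. p ^ t * (p - 1) < e" and "j \<le> v"
  shows "profile p e v (min J v) \<le> profile p e v j"
    and "profile p e v j = profile p e v (min J v) \<longleftrightarrow>
           j = min J v \<or> (e = p ^ J * (p - 1) \<and> J < v \<and> j = Suc J)"
proof -
  let ?F = "profile p e v" and ?m = "min J v"
  consider "j < ?m" | "j = ?m" | "J < j" "?m = J"
    using \<open>j \<le> v\<close> by linarith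
  then have "?F ?m \<le> ?F j \<and> (?F j = ?F ?m \<longleftrightarrow> j = ?m \<or> (e = p ^ J * (p - 1) \<and> J < v \<and> j = Suc J))"
  proof cases
    case 1
    then have "?F ?m < ?F j"
      using p J(2) by (intro profile_less_antimono) auto
    then show ?thesis
      using 1 by auto
  next
    case 2
    then show ?thesis
      by simp
  next
    case 3
    have step: "?F (Suc J) = ?F J + int (p ^ J * (p - 1)) - int e"
      using p by (simp add: profile_Suc)
    have "p ^ J * (p - 1) < p ^ Suc J * (p - 1)"
      using p by simp
    then have above: "e < p ^ Suc J * (p - 1)"
      using J(1) by linarith
    have "int e \<le> int (p ^ J * (p - 1))"
      using J(1) by (simp only: of_nat_le_iff)
    then have "?F J \<le> ?F (Suc J)"
      using step by linarith
    moreover have "?F (Suc J) \<le> ?F j"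
      using p above 3 by (intro profile_mono) auto
    moreover have "?F (Suc J) < ?F j" if "j \<noteq> Suc J"
      using p above 3 that by (intro profile_less_mono) auto
    moreover have "?F (Suc J) = ?F J \<longleftrightarrow> e = p ^ J * (p - 1)"
      using step by linarith
    ultimately show ?thesis
      using 3 \<open>j \<le> v\<close> by (cases "j = Suc J") auto
  qed
  then show "?F ?m \<le> ?F j"
    and "?F j = ?F ?m \<longleftrightarrow> j = ?m \<or> (e = p ^ J * (p - 1) \<and> J < v \<and> j = Suc J)"
    by auto
qed

lemma u_eq_profile:
  fixes p n e k :: nat
  assumes "prime p" "n > 0" "1 \<le> k" "k \<le> p ^ multiplicity p n"
  shows "int (u p n e k) = profile p e (multiplicity p n) (multiplicity p k)
                            + (int k - int (p ^ multiplicity p k))"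
proof -
  have "multiplicity p (n choose k) + multiplicity p k = multiplicity p n"
    by (rule multiplicity_binomial_add[OF assms])
  then have "int (multiplicity p (n choose k)) = int (multiplicity p n) - int (multiplicity p k)"
    by linarith
  then show ?thesis
    by (simp add: u_def profile_def)
qed

lemma u_prime_power:
  fixes p n e j :: nat
  assumes "prime p" "n > 0" "j \<le> multiplicity p n"
  shows "int (u p n e (p ^ j)) = profile p e (multiplicity p n) j"
proof -
  have "p ^ j \<le> p ^ multiplicity p n"
    using assms(3) prime_gt_0_nat[OF assms(1)] by (simp add: power_increasing)
  then show ?thesis
    using u_eq_profile[of p n "p ^ j" e] assms(1,2) prime_gt_0_nat[OF assms(1)] by simp
qed

lemma Min_image_argmin:
  fixes f :: "'a \<Rightarrow> 'b::linorder"
  assumes "finite A" "S \<subseteq> A" "s \<in> S"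
    and "\<And>k. k \<in> S \<Longrightarrow> f k = f s" and "\<And>k. k \<in> A \<Longrightarrow> k \<notin> S \<Longrightarrow> f s < f k"
  shows "Min (f ` A) = f s" and "{k \<in> A. f k = Min (f ` A)} = S"
proof -
  have "f s \<le> f k" if "k \<in> A" for k
    using assms(4,5) that by (cases "k \<in> S") (auto intro: less_imp_le)
  then show min: "Min (f ` A) = f s"
    using assms(1-3) by (intro Min_eqI) auto
  show "{k \<in> A. f k = Min (f ` A)} = S"
    unfolding min using assms(2,4,5) by force
qed

lemma u_above_profile_minimum:
  fixes p n e J k :: nat
  assumes p: "prime p" and n: "n > 0"
    and J: "e \<le> p ^ J * (p - 1)" "\<forall>t<J. p ^ t * (p - 1) < e" and k: "k \<in> {1..n}"
  defines "v \<equiv> multiplicity p n"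
  shows "profile p e v (min J v) < int (u p n e k) \<or> k = p ^ min J v
           \<or> (e = p ^ J * (p - 1) \<and> J < v \<and> k = p ^ Suc J)"
proof (cases "k \<le> p ^ v")
  case True
  have p1: "p > 1"
    using p by (rule prime_gt_1_nat)
  define j where "j = multiplicity p k"
  have "multiplicity p (n choose k) + j = v"
    using multiplicity_binomial_add[OF p n] k True unfolding v_def j_def by simp
  then have "j \<le> v"
    by simp
  have "p ^ j \<le> k"
    using k unfolding j_def by (simp add: dvd_imp_le multiplicity_dvd)
  moreover have "int (u p n e k) = profile p e v j + (int k - int (p ^ j))"
    using u_eq_profile[OF p n] k True unfolding v_def j_def by simp
  moreover have "profile p e v (min J v) \<le> profile p e v j"
    by (rule profile_minimum(1)[OF p1 J \<open>j \<le> v\<close>])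
  moreover have "k = p ^ j \<and> profile p e v j = profile p e v (min J v) \<Longrightarrow>
      k = p ^ min J v \<or> (e = p ^ J * (p - 1) \<and> J < v \<and> k = p ^ Suc J)"
    using profile_minimum(2)[OF p1 J \<open>j \<le> v\<close>] by auto
  ultimately show ?thesis
    by (cases "k = p ^ j") (auto simp del: of_nat_power)
next
  case False
  have "profile p e v (min J v) \<le> profile p e v v"
    using prime_gt_1_nat[OF p] J by (intro profile_minimum(1)) simp_all
  also have "\<dots> = int (p ^ v)"
    by (simp add: profile_def)
  also have "\<dots> < int k"
    using False by simp
  also have "\<dots> \<le> int (u p n e k)"
    by (simp add: u_def)
  finally show ?thesis
    by simp
qed

lemma minval_argmins:
  fixes p n e J :: nat
  assumes p: "prime p" and n: "n > 0"
    and J: "e \<le> p ^ J * (p - 1)" "\<forall>t<J. p ^ t * (p - 1) < e"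
  defines "v \<equiv> multiplicity p n"
  shows "minval p n e = e * (v - min J v) + p ^ min J v"
    and "argmins p n e = {p ^ min J v} \<union> (if e = p ^ J * (p - 1) \<and> J < v then {p ^ Suc J} else {})"
proof -
  define m where "m = min J v"
  define S where "S = {p ^ m} \<union> (if e = p ^ J * (p - 1) \<and> J < v then {p ^ Suc J} else {})"
  have p1: "p > 1"
    using p by (rule prime_gt_1_nat)
  have "p ^ v \<le> n"
    using n unfolding v_def by (simp add: dvd_imp_le multiplicity_dvd)
  then have pow_in: "p ^ j \<in> {1..n}" if "j \<le> v" for j
    using p1 that by (auto intro: order_trans[OF power_increasing])
  have S_sub: "S \<subseteq> {1..n}"
    using pow_in[of m] pow_in[of "Suc J"] unfolding S_def m_def by (auto simp del: power_Suc)
  have "p ^ m \<in> S"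
    unfolding S_def by simp
  have on_S: "int (u p n e k) = profile p e v m" if "k \<in> S" for k
    using that profile_minimum(2)[OF p1 J, of "Suc J" v] u_prime_power[OF p n, of m e]
      u_prime_power[OF p n, of "Suc J" e]
    unfolding S_def m_def v_def by (auto split: if_splits)
  have "u p n e k = u p n e (p ^ m)" if "k \<in> S" for k
    using on_S[OF that] on_S[OF \<open>p ^ m \<in> S\<close>] by simp
  moreover have "u p n e (p ^ m) < u p n e k" if "k \<in> {1..n}" "k \<notin> S" for k
    using u_above_profile_minimum[OF p n J that(1)] on_S[OF \<open>p ^ m \<in> S\<close>] that(2)
    unfolding S_def m_def v_def by (auto split: if_splits)
  ultimately have Min: "Min (u p n e ` {1..n}) = u p n e (p ^ m)"
    and argmin: "{k \<in> {1..n}. u p n e k = Min (u p n e ` {1..n})} = S"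
    using Min_image_argmin[OF _ S_sub \<open>p ^ m \<in> S\<close>] by auto
  have "int (u p n e (p ^ m)) = int (e * (v - m) + p ^ m)"
    using u_prime_power[OF p n, of m e, folded v_def] m_def by (simp add: profile_def of_nat_diff)
  then show "minval p n e = e * (v - min J v) + p ^ min J v"
    unfolding minval_def Min m_def by (simp only: of_nat_eq_iff)
  show "argmins p n e = {p ^ min J v} \<union> (if e = p ^ J * (p - 1) \<and> J < v then {p ^ Suc J} else {})"
    unfolding argmins_def minval_def argmin[unfolded S_def m_def] ..
qed

definition critical_exponent :: "nat \<Rightarrow> nat \<Rightarrow> nat" where
  "critical_exponent p e = (LEAST j. e \<le> p ^ j * (p - 1))"

lemma critical_exponent_bounds:
  fixes p e :: nat
  assumes "p > 1"
  shows "e \<le> p ^ critical_exponent p e * (p - 1)"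
    and "\<forall>t < critical_exponent p e. p ^ t * (p - 1) < e"
proof -
  have "e < 2 ^ e"
    by (rule less_exp)
  also have "\<dots> \<le> p ^ e"
    using assms by (simp add: power_mono)
  also have "\<dots> \<le> p ^ e * (p - 1)"
    using assms by simp
  finally have "e \<le> p ^ e * (p - 1)"
    by simp
  then show "e \<le> p ^ critical_exponent p e * (p - 1)"
    unfolding critical_exponent_def by (rule LeastI)
  show "\<forall>t < critical_exponent p e. p ^ t * (p - 1) < e"
    unfolding critical_exponent_def using not_less_Least by force
qed

lemma tie_quotients:
  fixes p e J :: nat
  assumes "p > 1" "e = p ^ J * (p - 1)"
  shows "real e / (real p - 1) = real (p ^ J)"
    and "real p * real e / (real p - 1) = real (p ^ Suc J)"
proof -
  show quot: "real e / (real p - 1) = real (p ^ J)"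
    using assms by (simp add: of_nat_diff)
  then show "real p * real e / (real p - 1) = real (p ^ Suc J)"
    by (simp add: times_divide_eq_right[symmetric])
qed

lemma ell_le_iff:
  fixes p e j :: nat
  assumes "p > 1" "e > 0"
  shows "ell p e \<le> real j \<longleftrightarrow> e \<le> p ^ j * (p - 1)"
proof -
  have "ell p e \<le> real j \<longleftrightarrow> real e / (real p - 1) \<le> real p ^ j"
    using assms unfolding ell_def by (simp add: log_le_iff powr_realpow)
  also have "\<dots> \<longleftrightarrow> real e \<le> real (p ^ j * (p - 1))"
    using assms by (simp add: divide_le_eq of_nat_diff)
  finally show ?thesis
    by (simp only: of_nat_le_iff)
qed

lemma ell_eq_iff:
  fixes p e j :: nat
  assumes "p > 1" "e > 0"
  shows "ell p e = real j \<longleftrightarrow> e = p ^ j * (p - 1)"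
proof -
  have "ell p e = real j \<longleftrightarrow> real e / (real p - 1) = real p ^ j"
    using assms unfolding ell_def by (auto simp: powr_eq_iff[symmetric] powr_realpow)
  also have "\<dots> \<longleftrightarrow> real e = real (p ^ j * (p - 1))"
    using assms by (simp add: divide_eq_eq of_nat_diff)
  finally show ?thesis
    by (simp only: of_nat_eq_iff)
qed

lemma ell_gt_minus_one:
  fixes p e :: nat
  assumes "p > 1" "e > 0"
  shows "-1 < ell p e"
proof -
  have "1 / real p < 1 / (real p - 1)"
    using assms by (simp add: frac_less2)
  also have "\<dots> \<le> real e / (real p - 1)"
    using assms by (simp add: divide_right_mono)
  finally show ?thesis
    using assms unfolding ell_def by (simp add: less_log_iff powr_minus divide_inverse)
qed

lemma ceiling_ell:
  fixes p e :: nat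
  assumes "p > 1" "e > 0"
  shows "\<lceil>ell p e\<rceil> = int (critical_exponent p e)"
proof -
  let ?J = "critical_exponent p e"
  have "ell p e \<le> real ?J"
    using critical_exponent_bounds(1)[OF assms(1)] ell_le_iff[OF assms] by blast
  moreover have "real ?J - 1 < ell p e"
  proof (cases ?J)
    case 0
    then show ?thesis
      using ell_gt_minus_one[OF assms] by simp
  next
    case (Suc t)
    then have "\<not> ell p e \<le> real t"
      using critical_exponent_bounds(2)[OF assms(1), of e] ell_le_iff[OF assms, of t] Suc by auto
    then show ?thesis
      using Suc by simp
  qed
  ultimately show ?thesis
    by (simp add: ceiling_eq_iff)
qed

lemma ell_in_Ints_iff:
  fixes p e :: nat
  assumes "p > 1" "e > 0"
  shows "ell p e \<in> \<int> \<longleftrightarrow> ell p e = real (critical_exponent p e)"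
proof
  assume "ell p e \<in> \<int>"
  then have "ell p e = of_int \<lceil>ell p e\<rceil>"
    by (metis Ints_cases ceiling_of_int)
  then show "ell p e = real (critical_exponent p e)"
    using ceiling_ell[OF assms] by simp
qed simp

theorem mainTheorem14:
  fixes p n e :: nat
  assumes "prime p" and "n > 0" and "e > 0"
  shows
   "(ell p e \<in> \<int> \<and> ell p e < real (multiplicity p n) \<longrightarrow>
       argmins p n e = {k. real k = real e / (real p - 1) \<or> real k = real p * real e / (real p - 1)}
     \<and> real (minval p n e) = real e * (real (multiplicity p n) + 1 / (real p - 1) - ell p e))
  \<and> ((ell p e \<in> \<int> \<and> ell p e \<ge> real (multiplicity p n)) \<or>
      (ell p e \<notin> \<int> \<and> \<lceil>ell p e\<rceil> > int (multiplicity p n)) \<longrightarrow>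
       argmins p n e = {p ^ multiplicity p n} \<and> minval p n e = p ^ multiplicity p n)
  \<and> (ell p e \<notin> \<int> \<and> \<lceil>ell p e\<rceil> \<le> int (multiplicity p n) \<longrightarrow>
       argmins p n e = {k. real k = real p powr real_of_int \<lceil>ell p e\<rceil>}
     \<and> real (minval p n e) = real e * (real (multiplicity p n) - real_of_int \<lceil>ell p e\<rceil>)
                            + real p powr real_of_int \<lceil>ell p e\<rceil>)"
proof -
  have p1: "p > 1"
    using assms(1) by (rule prime_gt_1_nat)
  define v J where "v = multiplicity p n" and "J = critical_exponent p e"
  have ceil: "\<lceil>ell p e\<rceil> = int J"
    unfolding J_def by (rule ceiling_ell[OF p1 assms(3)])
  have Ints: "ell p e \<in> \<int> \<longleftrightarrow> ell p e = real J"
    unfolding J_def by (rule ell_in_Ints_iff[OF p1 assms(3)])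
  have tie: "ell p e = real J \<longleftrightarrow> e = p ^ J * (p - 1)"
    by (rule ell_eq_iff[OF p1 assms(3)])
  have powr_ceil: "real p powr real_of_int \<lceil>ell p e\<rceil> = real (p ^ J)"
    using ceil p1 by (simp add: powr_realpow)
  note main = minval_argmins[OF assms(1,2) critical_exponent_bounds[OF p1, of e], folded J_def v_def]
  show ?thesis
    unfolding v_def[symmetric] powr_ceil
  proof (intro conjI impI)
    assume "ell p e \<in> \<int> \<and> ell p e < real v"
    then have "e = p ^ J * (p - 1)" and ell_J: "ell p e = real J" and "J < v"
      using Ints tie by auto
    note quot = tie_quotients[OF p1 \<open>e = p ^ J * (p - 1)\<close>]
    have "argmins p n e = {p ^ J, p ^ Suc J}" and "minval p n e = e * (v - J) + p ^ J"
      using main \<open>e = p ^ J * (p - 1)\<close> \<open>J < v\<close> by auto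
    then show "argmins p n e = {k. real k = real e / (real p - 1) \<or> real k = real p * real e / (real p - 1)}"
      unfolding quot by (simp only: of_nat_eq_iff) auto
    have "real (minval p n e) = real e * (real v - real J) + real e / (real p - 1)"
      unfolding quot using \<open>minval p n e = e * (v - J) + p ^ J\<close> \<open>J < v\<close> by (simp add: of_nat_diff)
    then show "real (minval p n e) = real e * (real v + 1 / (real p - 1) - ell p e)"
      unfolding ell_J by (simp add: algebra_simps)
  next
    assume "ell p e \<in> \<int> \<and> real v \<le> ell p e \<or> ell p e \<notin> \<int> \<and> int v < \<lceil>ell p e\<rceil>"
    then have "v \<le> J"
      using Ints ceil by auto
    then show "argmins p n e = {p ^ v}" and "minval p n e = p ^ v"
      using main by auto
  next
    assume "ell p e \<notin> \<int> \<and> \<lceil>ell p e\<rceil> \<le> int v"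
    then have "e \<noteq> p ^ J * (p - 1)" "J \<le> v"
      using Ints tie ceil by auto
    then show "argmins p n e = {k. real k = real (p ^ J)}"
      and "real (minval p n e) = real e * (real v - real_of_int \<lceil>ell p e\<rceil>) + real (p ^ J)"
      using main ceil by (auto simp: of_nat_diff)
  qed
qed

end
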